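(* Let $a,b,c,m>0$ with $0<a<1$ and consider, with bifurcation parameter $k>0$, the system $$\frac{dx}{dt}=bx(1-x-cy),\qquad \frac{dy}{dt}=y\Big(\frac{1}{1+kx}-y-ax-mxy\Big).$$ Let $k^*=\frac1a-1$. Suppose $u(E)<0$ and $m\ne -a^2c+2ac-1$. Then the system undergoes a transcritical bifurcation around the boundary equilibrium $E_1=(1,0)$ at the bifurcation parameter threshold $k_{TR}=k^*$.
   Context: Here $u(x)=A_1x^3+A_2x^2+A_3x+A_4$ with $A_1=km$, $A_2=(-ac-m+1)k+m$, $A_3=-ac-k-m+1$, $A_4=c-1$ (the cubic whose roots in $(0,1)$ give the $x$-coordinates of positive equilibria $(x,(1-x)/c)$), and $E$ denotes the larger real root of $u'(x)$ (assumed to exist). All parameters are positive. *)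

theory Defs
  imports "HOL-Analysis.Analysis"
begin

text \<open>A planar system  x' = f k x y,  y' = g k x y  depending on a real parameter k.\<close>

definition is_equilibrium ::
  "(real \<Rightarrow> real \<Rightarrow> real \<Rightarrow> real) \<Rightarrow> (real \<Rightarrow> real \<Rightarrow> real \<Rightarrow> real) \<Rightarrow> real \<Rightarrow> real \<times> real \<Rightarrow> bool"
  where "is_equilibrium f g k p \<longleftrightarrow> f k (fst p) (snd p) = 0 \<and> g k (fst p) (snd p) = 0"

definition has_jacobian ::
  "(real \<Rightarrow> real \<Rightarrow> real \<Rightarrow> real) \<Rightarrow> (real \<Rightarrow> real \<Rightarrow> real \<Rightarrow> real) \<Rightarrow> real \<Rightarrow> real \<times> real \<Rightarrow> bool"
  where "has_jacobian f g k p \<longleftrightarrow>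
     (\<lambda>s. f k s (snd p)) differentiable (at (fst p)) \<and> (\<lambda>s. f k (fst p) s) differentiable (at (snd p)) \<and>
     (\<lambda>s. g k s (snd p)) differentiable (at (fst p)) \<and> (\<lambda>s. g k (fst p) s) differentiable (at (snd p))"

definition jacobian_eigenvalues ::
  "(real \<Rightarrow> real \<Rightarrow> real \<Rightarrow> real) \<Rightarrow> (real \<Rightarrow> real \<Rightarrow> real \<Rightarrow> real) \<Rightarrow> real \<Rightarrow> real \<times> real \<Rightarrow> complex set"
  where "jacobian_eigenvalues f g k p =
    (let a11 = deriv (\<lambda>s. f k s (snd p)) (fst p);
         a12 = deriv (\<lambda>s. f k (fst p) s) (snd p);
         a21 = deriv (\<lambda>s. g k s (snd p)) (fst p);
         a22 = deriv (\<lambda>s. g k (fst p) s) (snd p)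
     in {z::complex. z\<^sup>2 - of_real (a11 + a22) * z + of_real (a11 * a22 - a12 * a21) = 0})"

definition lin_stable where
  "lin_stable f g k p \<longleftrightarrow> is_equilibrium f g k p \<and> has_jacobian f g k p \<and>
     (\<forall>z\<in>jacobian_eigenvalues f g k p. Re z < 0)"

definition lin_unstable where
  "lin_unstable f g k p \<longleftrightarrow> is_equilibrium f g k p \<and> has_jacobian f g k p \<and>
     (\<exists>z\<in>jacobian_eigenvalues f g k p. Re z > 0)"

definition transcritical_bifurcation ::
  "(real \<Rightarrow> real \<Rightarrow> real \<Rightarrow> real) \<Rightarrow> (real \<Rightarrow> real \<Rightarrow> real \<Rightarrow> real) \<Rightarrow> real \<times> real \<Rightarrow> real \<Rightarrow> bool"
  where "transcritical_bifurcation f g p0 k0 \<longleftrightarrow>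
    (\<exists>\<delta>>0. \<exists>\<epsilon>>0. \<exists>q :: real \<Rightarrow> real \<times> real.
       (\<forall>k. \<bar>k - k0\<bar> < \<delta> \<longrightarrow>
           is_equilibrium f g k p0 \<and> is_equilibrium f g k (q k) \<and>
           (\<forall>p. dist p p0 < \<epsilon> \<and> is_equilibrium f g k p \<longrightarrow> p = p0 \<or> p = q k)) \<and>
       continuous_on {k0 - \<delta> <..< k0 + \<delta>} q \<and> q k0 = p0 \<and>
       (\<forall>k. 0 < \<bar>k - k0\<bar> \<and> \<bar>k - k0\<bar> < \<delta> \<longrightarrow> q k \<noteq> p0) \<and>
       (((\<forall>k. k0 - \<delta> < k \<and> k < k0 \<longrightarrow> lin_stable f g k p0 \<and> lin_unstable f g k (q k)) \<and>
         (\<forall>k. k0 < k \<and> k < k0 + \<delta> \<longrightarrow> lin_unstable f g k p0 \<and> lin_stable f g k (q k))) \<or>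
        ((\<forall>k. k0 - \<delta> < k \<and> k < k0 \<longrightarrow> lin_unstable f g k p0 \<and> lin_stable f g k (q k)) \<and>
         (\<forall>k. k0 < k \<and> k < k0 + \<delta> \<longrightarrow> lin_stable f g k p0 \<and> lin_unstable f g k (q k)))))"

definition ucubic :: "real \<Rightarrow> real \<Rightarrow> real \<Rightarrow> real \<Rightarrow> real \<Rightarrow> real" where
  "ucubic a c m k x =
     (k * m) * x ^ 3 + ((- a * c - m + 1) * k + m) * x\<^sup>2 + (- a * c - k - m + 1) * x + (c - 1)"

end

(*
  E1 = (1, 0) is an equilibrium for every k, with Jacobian eigenvalues -b and 1/(1 + k) - a;
  the second one changes sign exactly at k0 = 1/a - 1.  An equilibrium (x, y) near E1 with
  y \<noteq> 0 lies on x = 1 - c y and satisfies 1/(1 + k x) = w(y) := a x + y + m x y, i.e.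
  k = K(y) := (1/w(y) - 1)/(1 - c y).  The condition m \<noteq> -a^2 c + 2 a c - 1 says precisely
  K'(0) \<noteq> 0, so K has a continuous local inverse Y with Y(k0) = 0, which is the second branch
  of equilibria.  Along it the trace of the Jacobian is negative and its determinant equals
  -b x^2 w^2 y K'(y), whose sign is that of k0 - k by monotonicity of K.  Hence the branch is
  stable for k < k0 and unstable for k > k0, while E1 does the opposite.
*)
theory Submission imports Defs begin

lemma quadratic_root_Re_neg:
  fixes T D :: real and z :: complex
  assumes "T < 0" "0 < D" and root: "z\<^sup>2 - of_real T * z + of_real D = 0"
  shows "Re z < 0"
proof -
  have re: "(Re z)\<^sup>2 - (Im z)\<^sup>2 - T * Re z + D = 0"
    using arg_cong[OF root, of Re] by (simp add: power2_eq_square)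
  have im: "(2 * Re z - T) * Im z = 0"
    using arg_cong[OF root, of Im] by (simp add: power2_eq_square algebra_simps)
  show ?thesis
  proof (cases "Im z = 0")
    case True
    then have "(Re z)\<^sup>2 - T * Re z + D = 0" using re by simp
    then show ?thesis using assms(1,2)
      by (smt (verit) mult_nonpos_nonneg zero_le_power2)
  next
    case False
    then show ?thesis using im \<open>T < 0\<close> by simp
  qed
qed

lemma quadratic_root_Re_pos:
  fixes T D :: real
  assumes "D < 0"
  obtains z :: complex where "z\<^sup>2 - of_real T * z + of_real D = 0" "0 < Re z"
proof -
  define s where "s = sqrt (T\<^sup>2 - 4 * D)"
  have "0 \<le> T\<^sup>2 - 4 * D" using assms by (smt (verit) zero_le_power2)
  then have s2: "s\<^sup>2 = T\<^sup>2 - 4 * D" unfolding s_def by simp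
  have "sqrt (T\<^sup>2) < s"
    unfolding s_def using assms by (intro real_sqrt_less_mono) simp
  then have "\<bar>T\<bar> < s" by simp
  define x where "x = (T + s) / 2"
  have "x\<^sup>2 - T * x + D = 0"
    unfolding x_def using s2 by (simp add: power2_eq_square field_simps)
  then have "(complex_of_real x)\<^sup>2 - of_real T * of_real x + of_real D = 0"
    by (metis of_real_0 of_real_add of_real_diff of_real_mult of_real_power)
  moreover have "0 < x" unfolding x_def using \<open>\<bar>T\<bar> < s\<close> by (simp add: abs_less_iff)
  ultimately show ?thesis using that by simp
qed

lemma lin_stableI:
  assumes "is_equilibrium f g k p" "has_jacobian f g k p"
    and "jacobian_eigenvalues f g k p = {z. z\<^sup>2 - of_real T * z + of_real D = 0}"
    and "T < 0" "0 < D"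
  shows "lin_stable f g k p"
  unfolding lin_stable_def using assms quadratic_root_Re_neg[of T D] by blast

lemma lin_unstableI:
  assumes "is_equilibrium f g k p" "has_jacobian f g k p"
    and "jacobian_eigenvalues f g k p = {z. z\<^sup>2 - of_real T * z + of_real D = 0}"
    and "D < 0"
  shows "lin_unstable f g k p"
proof -
  obtain z where "z\<^sup>2 - of_real T * z + of_real D = 0" "0 < Re z"
    using quadratic_root_Re_pos[OF \<open>D < 0\<close>] .
  then show ?thesis unfolding lin_unstable_def using assms by blast
qed

lemma transcritical_bifurcationI:
  assumes "0 < \<delta>" "0 < \<epsilon>" "continuous_on {k0 - \<delta><..<k0 + \<delta>} q" "q k0 = p0"
    and "\<And>k. \<bar>k - k0\<bar> < \<delta> \<Longrightarrow> is_equilibrium f g k p0 \<and> is_equilibrium f g k (q k)"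
    and "\<And>k p. \<bar>k - k0\<bar> < \<delta> \<Longrightarrow> dist p p0 < \<epsilon> \<Longrightarrow> is_equilibrium f g k p \<Longrightarrow> p = p0 \<or> p = q k"
    and "\<And>k. \<bar>k - k0\<bar> < \<delta> \<Longrightarrow> k \<noteq> k0 \<Longrightarrow> q k \<noteq> p0"
    and "\<And>k. k0 - \<delta> < k \<Longrightarrow> k < k0 \<Longrightarrow> lin_unstable f g k p0 \<and> lin_stable f g k (q k)"
    and "\<And>k. k0 < k \<Longrightarrow> k < k0 + \<delta> \<Longrightarrow> lin_stable f g k p0 \<and> lin_unstable f g k (q k)"
  shows "transcritical_bifurcation f g p0 k0"
  unfolding transcritical_bifurcation_def
  by (rule exI[of _ \<delta>], rule conjI[OF assms(1)], rule exI[of _ \<epsilon>], rule conjI[OF assms(2)],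
      rule exI[of _ q]) (use assms in auto)

lemma zero_less_mult_of_common_factor:
  fixes s u v :: real
  assumes "0 < s * u" "0 < s * v"
  shows "0 < u * v"
  using assms by (auto simp: zero_less_mult_iff)

lemma increment_sign_from_derivative_sign:
  fixes f f' :: "real \<Rightarrow> real"
  assumes der: "\<And>x. x \<in> {s..t} \<Longrightarrow> (f has_real_derivative f' x) (at x)"
    and sign: "\<And>x. x \<in> {s..t} \<Longrightarrow> 0 < \<sigma> * f' x"
    and "x \<in> {s..t}" "y \<in> {s..t}" "x \<noteq> y"
  shows "0 < \<sigma> * (f y - f x) * (y - x)"
proof -
  have less: "0 < \<sigma> * (f v - f u) * (v - u)" if "u \<in> {s..t}" "v \<in> {s..t}" "u < v" for u v
  proof -
    have "\<And>z. u \<le> z \<Longrightarrow> z \<le> v \<Longrightarrow> (f has_real_derivative f' z) (at z)"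
      using der that by simp
    then obtain z where z: "u < z" "z < v" "f v - f u = (v - u) * f' z"
      using MVT2[OF \<open>u < v\<close>] by blast
    have "0 < \<sigma> * f' z" using sign z that by simp
    then have "0 < (\<sigma> * f' z) * (v - u)\<^sup>2" using \<open>u < v\<close> by simp
    also have "\<dots> = \<sigma> * (f v - f u) * (v - u)"
      unfolding z(3) power2_eq_square by (simp add: mult_ac)
    finally show ?thesis .
  qed
  show ?thesis
  proof (cases "x < y")
    case True
    then show ?thesis using less assms(3,4) by blast
  next
    case False
    then have "y < x" using \<open>x \<noteq> y\<close> by simp
    then have "0 < \<sigma> * (f x - f y) * (x - y)" using less assms(3,4) by blast
    then show ?thesis by (simp add: algebra_simps)
  qed
qed

lemma continuous_local_inverse:
  fixes f :: "real \<Rightarrow> real"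
  assumes cont: "continuous_on {s..t} f" and inj: "inj_on f {s..t}"
    and "u \<in> {s..t}" and ends: "(f s - f u) * (f t - f u) < 0"
  obtains \<delta> g where "0 < \<delta>" "continuous_on {f u - \<delta><..<f u + \<delta>} g" "g (f u) = u"
    "\<And>k. \<bar>k - f u\<bar> < \<delta> \<Longrightarrow> g k \<in> {s..t} \<and> f (g k) = k"
proof -
  define g where "g = inv_into {s..t} f"
  have g_f: "\<forall>y\<in>{s..t}. g (f y) = y" unfolding g_def using inv_into_f_f[OF inj] by blast
  define \<delta> where "\<delta> = min \<bar>f s - f u\<bar> \<bar>f t - f u\<bar>"
  have "0 < \<delta>" unfolding \<delta>_def using ends by auto
  have "s \<le> t" using \<open>u \<in> {s..t}\<close> by simp
  have conn: "connected (f ` {s..t})" by (rule connected_continuous_image[OF cont]) simp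
  have "{min (f s) (f t)..max (f s) (f t)} \<subseteq> f ` {s..t}"
    using connected_contains_Icc[OF conn] \<open>s \<le> t\<close> by (simp add: min_def max_def)
  moreover have "{f u - \<delta><..<f u + \<delta>} \<subseteq> {min (f s) (f t)..max (f s) (f t)}"
    unfolding \<delta>_def using ends by (auto simp: mult_less_0_iff)
  ultimately have ball: "{f u - \<delta><..<f u + \<delta>} \<subseteq> f ` {s..t}" by blast
  have "continuous_on {f u - \<delta><..<f u + \<delta>} g"
    using continuous_on_inv[OF cont compact_Icc g_f] ball by (rule continuous_on_subset)
  moreover have "g (f u) = u" using g_f \<open>u \<in> {s..t}\<close> by blast
  moreover have "g k \<in> {s..t} \<and> f (g k) = k" if k: "\<bar>k - f u\<bar> < \<delta>" for k
  proof -
    have "k \<in> f ` {s..t}" using ball k by (auto simp: abs_less_iff)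
    then obtain y where "y \<in> {s..t}" "k = f y" by blast
    then show ?thesis using g_f by simp
  qed
  ultimately show ?thesis using that[OF \<open>0 < \<delta>\<close>] by blast
qed

lemma local_inverse_from_derivative_sign:
  fixes f f' :: "real \<Rightarrow> real"
  assumes der: "\<And>x. x \<in> {s..t} \<Longrightarrow> (f has_real_derivative f' x) (at x)"
    and sign: "\<And>x. x \<in> {s..t} \<Longrightarrow> 0 < \<sigma> * f' x"
    and "s < u" "u < t"
  obtains \<delta> g where "0 < \<delta>" "continuous_on {f u - \<delta><..<f u + \<delta>} g" "g (f u) = u"
    "\<And>k. \<bar>k - f u\<bar> < \<delta> \<Longrightarrow> g k \<in> {s..t} \<and> f (g k) = k"
    "\<And>k y. \<bar>k - f u\<bar> < \<delta> \<Longrightarrow> y \<in> {s..t} \<Longrightarrow> f y = k \<Longrightarrow> y = g k"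
    "\<And>k. \<bar>k - f u\<bar> < \<delta> \<Longrightarrow> k \<noteq> f u \<Longrightarrow> 0 < \<sigma> * (k - f u) * (g k - u)"
proof -
  have incr: "0 < \<sigma> * (f z - f y) * (z - y)" if "y \<in> {s..t}" "z \<in> {s..t}" "y \<noteq> z" for y z
    using increment_sign_from_derivative_sign[OF der sign that] .
  have inj: "inj_on f {s..t}"
    by (rule inj_onI) (use incr in fastforce)
  have cont: "continuous_on {s..t} f"
    using der by (intro continuous_at_imp_continuous_on ballI DERIV_isCont) auto
  have "0 < \<sigma> * ((f s - f u) * (s - u))" "0 < \<sigma> * ((f t - f u) * (t - u))"
    using incr[of u s] incr[of u t] assms(3,4) by (auto simp: mult.assoc)
  then have "0 < ((f s - f u) * (s - u)) * ((f t - f u) * (t - u))"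
    by (rule zero_less_mult_of_common_factor)
  also have "\<dots> = ((f s - f u) * (f t - f u)) * ((s - u) * (t - u))"
    by (simp only: mult_ac)
  finally have "0 < ((f s - f u) * (f t - f u)) * ((s - u) * (t - u))" .
  moreover have "(s - u) * (t - u) < 0" using assms(3,4) by (simp add: mult_neg_pos)
  ultimately have ends: "(f s - f u) * (f t - f u) < 0" by (smt (verit) mult_nonneg_nonpos)
  have "u \<in> {s..t}" using assms(3,4) by simp
  obtain \<delta> g where "0 < \<delta>" "continuous_on {f u - \<delta><..<f u + \<delta>} g" "g (f u) = u"
    and g: "\<And>k. \<bar>k - f u\<bar> < \<delta> \<Longrightarrow> g k \<in> {s..t} \<and> f (g k) = k"
    using continuous_local_inverse[OF cont inj \<open>u \<in> {s..t}\<close> ends] by blast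
  moreover have "y = g k" if "\<bar>k - f u\<bar> < \<delta>" "y \<in> {s..t}" "f y = k" for k y
    using inj_onD[OF inj, of y "g k"] g[OF that(1)] that(2,3) by simp
  moreover have "0 < \<sigma> * (k - f u) * (g k - u)" if "\<bar>k - f u\<bar> < \<delta>" "k \<noteq> f u" for k
  proof -
    have "g k \<noteq> u" using g[OF that(1)] that(2) by auto
    then show ?thesis using incr[of u "g k"] g[OF that(1)] assms(3,4) by auto
  qed
  ultimately show ?thesis using that by blast
qed

abbreviation xdot :: "real \<Rightarrow> real \<Rightarrow> real \<Rightarrow> real \<Rightarrow> real \<Rightarrow> real" where
  "xdot b c \<equiv> \<lambda>k x y. b * x * (1 - x - c * y)"

abbreviation ydot :: "real \<Rightarrow> real \<Rightarrow> real \<Rightarrow> real \<Rightarrow> real \<Rightarrow> real" where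
  "ydot a m \<equiv> \<lambda>k x y. y * (1 / (1 + k * x) - y - a * x - m * x * y)"

lemma
  fixes a b c m k x y :: real
  assumes "1 + k * x \<noteq> 0"
  shows has_jacobian_xdot_ydot: "has_jacobian (xdot b c) (ydot a m) k (x, y)"
    and jacobian_eigenvalues_xdot_ydot: "jacobian_eigenvalues (xdot b c) (ydot a m) k (x, y) =
      {z. z\<^sup>2 - of_real (b * (1 - 2*x - c*y) + (1 / (1 + k*x) - 2*y - a*x - 2*m*x*y)) * z
          + of_real (b * (1 - 2*x - c*y) * (1 / (1 + k*x) - 2*y - a*x - 2*m*x*y)
                     - (- b*c*x) * (y * (- k / (1 + k*x)\<^sup>2 - a - m*y))) = 0}"
      (is "_ = ?eigenvalues")
proof -
  have dx_x: "((\<lambda>t. b * t * (1 - t - c*y)) has_real_derivative b * (1 - 2*x - c*y)) (at x)"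
    by (auto intro!: derivative_eq_intros simp: algebra_simps)
  have dx_y: "((\<lambda>t. b * x * (1 - x - c*t)) has_real_derivative (- b*c*x)) (at y)"
    by (auto intro!: derivative_eq_intros)
  have dy_x: "((\<lambda>t. y * (1 / (1 + k*t) - y - a*t - m*t*y)) has_real_derivative
      y * (- k / (1 + k*x)\<^sup>2 - a - m*y)) (at x)"
    using assms by (auto intro!: derivative_eq_intros simp: field_simps power2_eq_square)
  have dy_y: "((\<lambda>t. t * (1 / (1 + k*x) - t - a*x - m*x*t)) has_real_derivative
      1 / (1 + k*x) - 2*y - a*x - 2*m*x*y) (at y)"
    by (rule derivative_eq_intros refl | simp add: algebra_simps)+
  show "has_jacobian (xdot b c) (ydot a m) k (x, y)"
    unfolding has_jacobian_def using dx_x dx_y dy_x dy_y by (auto simp: real_differentiable_def)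
  show "jacobian_eigenvalues (xdot b c) (ydot a m) k (x, y) = ?eigenvalues"
    unfolding jacobian_eigenvalues_def Let_def fst_conv snd_conv
    using DERIV_imp_deriv[OF dx_x] DERIV_imp_deriv[OF dx_y]
      DERIV_imp_deriv[OF dy_x] DERIV_imp_deriv[OF dy_y]
    by simp
qed

lemma equilibrium_E1: "is_equilibrium (xdot b c) (ydot a m) k (1, 0)"
  by (simp add: is_equilibrium_def)

lemma jacobian_eigenvalues_E1:
  assumes "-1 < k"
  shows "jacobian_eigenvalues (xdot b c) (ydot a m) k (1, 0) =
    {z. z\<^sup>2 - of_real (- b + (1 / (1 + k) - a)) * z + of_real (- b * (1 / (1 + k) - a)) = 0}"
  using assms jacobian_eigenvalues_xdot_ydot[where k=k and x=1 and y=0 and a=a and b=b and c=c and m=m]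
  by (simp add: algebra_simps)

lemma lin_stable_E1:
  assumes "0 < b" "-1 < k" "1 / (1 + k) < a"
  shows "lin_stable (xdot b c) (ydot a m) k (1, 0)"
  using assms
  by (intro lin_stableI[OF equilibrium_E1 _ jacobian_eigenvalues_E1])
    (auto intro: has_jacobian_xdot_ydot simp: mult_pos_neg)

lemma lin_unstable_E1:
  assumes "0 < b" "-1 < k" "a < 1 / (1 + k)"
  shows "lin_unstable (xdot b c) (ydot a m) k (1, 0)"
  using assms
  by (intro lin_unstableI[OF equilibrium_E1 _ jacobian_eigenvalues_E1])
    (auto intro: has_jacobian_xdot_ydot simp: mult_pos_pos)

definition branch_w :: "real \<Rightarrow> real \<Rightarrow> real \<Rightarrow> real \<Rightarrow> real" where
  "branch_w a c m y = a * (1 - c*y) + y + m * (1 - c*y) * y"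

definition branch_k :: "real \<Rightarrow> real \<Rightarrow> real \<Rightarrow> real \<Rightarrow> real" where
  "branch_k a c m y = (1 / branch_w a c m y - 1) / (1 - c*y)"

definition branch_dk :: "real \<Rightarrow> real \<Rightarrow> real \<Rightarrow> real \<Rightarrow> real" where
  "branch_dk a c m y =
    (- (1 - a*c + m - 2*m*c*y) * (1 - c*y) / (branch_w a c m y)\<^sup>2 + c * (1 / branch_w a c m y - 1))
      / (1 - c*y)\<^sup>2"

lemma branch_k_has_derivative:
  assumes "branch_w a c m y \<noteq> 0" "1 - c*y \<noteq> 0"
  shows "(branch_k a c m has_real_derivative branch_dk a c m y) (at y)"
proof -
  have w: "(branch_w a c m has_real_derivative 1 - a*c + m - 2*m*c*y) (at y)"
    unfolding branch_w_def [abs_def] by (auto intro!: derivative_eq_intros simp: algebra_simps)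
  show ?thesis
    unfolding branch_k_def [abs_def]
    apply (rule derivative_eq_intros w refl | simp add: assms)+
    using assms unfolding branch_dk_def power2_eq_square
    by (simp add: divide_simps) (simp add: algebra_simps)
qed

lemma branch_at_0:
  assumes "0 < a"
  shows "branch_w a c m 0 = a" "branch_k a c m 0 = 1/a - 1"
    "branch_dk a c m 0 = - (1 + m + a\<^sup>2 * c - 2 * a * c) / a\<^sup>2"
  using assms
  by (simp_all add: branch_w_def branch_k_def branch_dk_def field_simps power2_eq_square)

lemma equilibrium_xdot_ydot_cases:
  assumes "0 < b" "x \<noteq> 0" and eq: "is_equilibrium (xdot b c) (ydot a m) k (x, y)"
  shows "(x, y) = (1, 0) \<or> x = 1 - c*y \<and> branch_k a c m y = k"
proof -
  have x: "x = 1 - c*y" using eq assms(1,2) by (simp add: is_equilibrium_def)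
  have "y * (1 / (1 + k*x) - y - a*x - m*x*y) = 0"
    using eq by (simp add: is_equilibrium_def)
  then consider "y = 0" | "1 / (1 + k*x) = a*x + y + m*x*y" by force
  then show ?thesis
  proof cases
    case 1
    then show ?thesis using x by simp
  next
    case 2
    have "1 + k*x = inverse (1 / (1 + k*x))" by simp
    also have "\<dots> = 1 / branch_w a c m y"
      using 2 unfolding branch_w_def x[symmetric] by (simp add: inverse_eq_divide)
    finally have "1 + k*x = 1 / branch_w a c m y" .
    then show ?thesis using x \<open>x \<noteq> 0\<close> by (simp add: branch_k_def field_simps)
  qed
qed

lemma branch_equilibrium:
  assumes "1 - c*y \<noteq> 0" "branch_k a c m y = k"
  shows "is_equilibrium (xdot b c) (ydot a m) k (1 - c*y, y)"
proof -
  have "k * (1 - c*y) = 1 / branch_w a c m y - 1"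
    using assms unfolding branch_k_def by force
  then have "1 + k * (1 - c*y) = 1 / branch_w a c m y" by simp
  then show ?thesis by (simp add: is_equilibrium_def branch_w_def)
qed

text \<open>Writing h for the per-capita growth rate of y, the Jacobian determinant on the branch is
  b x y (c h_x - h_y); differentiating h(1 - c y, y, K y) = 0 turns c h_x - h_y into
  h_k K' = - x w^2 K'.\<close>

lemma jacobian_det_branch:
  fixes a b c m k y :: real
  defines "x \<equiv> 1 - c*y" and "w \<equiv> branch_w a c m y"
  assumes w: "w \<noteq> 0" and x: "x \<noteq> 0" and k: "branch_k a c m y = k"
  shows "b * (1 - 2*x - c*y) * (1 / (1 + k*x) - 2*y - a*x - 2*m*x*y)
      - (- b*c*x) * (y * (- k / (1 + k*x)\<^sup>2 - a - m*y))
      = - b * x\<^sup>2 * w\<^sup>2 * y * branch_dk a c m y"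
proof -
  define w' where "w' = 1 - a*c + m - 2*m*c*y"
  have kx: "1 + k*x = 1 / w"
    using k x unfolding x_def w_def branch_k_def by (simp add: field_simps)
  then have inv: "1 / (1 + k*x) = w" by simp
  have w_eq: "w = a*x + y + m*x*y" unfolding w_def branch_w_def x_def by simp
  have w': "w' = 1 + m*x - a*c - m*c*y" unfolding w'_def x_def by (simp add: algebra_simps)
  have "k * x * w = 1 - w" using kx w by (simp add: field_simps)
  then have "k * w\<^sup>2 * x = w * (1 - w)"
    by (metis mult.commute mult.left_commute power2_eq_square)
  then have kw: "k * w\<^sup>2 = w * (1 - w) / x"
    using x by (simp add: field_simps)
  have "k / (1 + k*x)\<^sup>2 = k * (1 / (1 + k*x))\<^sup>2" by (simp add: power_one_over)
  then have "k / (1 + k*x)\<^sup>2 = k * w\<^sup>2" unfolding inv .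
  then have "b * (1 - 2*x - c*y) * (1 / (1 + k*x) - 2*y - a*x - 2*m*x*y)
      - (- b*c*x) * (y * (- k / (1 + k*x)\<^sup>2 - a - m*y))
      = b*x*y * (1 + m*x - a*c - m*c*y) - b*c*y * (x * (k * w\<^sup>2))"
    unfolding inv w_eq by (simp add: x_def algebra_simps)
  also have "\<dots> = b*y * (w' * x - c * w * (1 - w))"
    unfolding kw w' using x by (simp add: field_simps)
  also have "\<dots> = - b * x\<^sup>2 * w\<^sup>2 * y * branch_dk a c m y"
    using w x unfolding branch_dk_def w_def[symmetric] x_def[symmetric] w'_def[symmetric]
    by (simp add: field_simps power2_eq_square)
  finally show ?thesis .
qed

lemma
  assumes w: "branch_w a c m y \<noteq> 0" and x: "1 - c*y \<noteq> 0" and k: "branch_k a c m y = k"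
  shows has_jacobian_branch: "has_jacobian (xdot b c) (ydot a m) k (1 - c*y, y)"
    and jacobian_eigenvalues_branch: "jacobian_eigenvalues (xdot b c) (ydot a m) k (1 - c*y, y) =
      {z. z\<^sup>2 - of_real (- (b * (1 - c*y) + y + m * (1 - c*y) * y)) * z
          + of_real (- b * (1 - c*y)\<^sup>2 * (branch_w a c m y)\<^sup>2 * y * branch_dk a c m y) = 0}"
      (is "_ = ?eigenvalues")
proof -
  have "k * (1 - c*y) = 1 / branch_w a c m y - 1"
    using k x unfolding branch_k_def by force
  then have inv: "1 / (1 + k * (1 - c*y)) = branch_w a c m y" by simp
  then have nz: "1 + k * (1 - c*y) \<noteq> 0" using w by auto
  show "has_jacobian (xdot b c) (ydot a m) k (1 - c*y, y)"
    using has_jacobian_xdot_ydot[OF nz] .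
  have trace: "b * (1 - 2 * (1 - c*y) - c*y) + (1 / (1 + k * (1 - c*y)) - 2*y - a * (1 - c*y)
      - 2 * m * (1 - c*y) * y) = - (b * (1 - c*y) + y + m * (1 - c*y) * y)"
    unfolding inv branch_w_def by (simp add: algebra_simps)
  show "jacobian_eigenvalues (xdot b c) (ydot a m) k (1 - c*y, y) = ?eigenvalues"
    using jacobian_eigenvalues_xdot_ydot[OF nz, where a=a and b=b and c=c and m=m and y=y]
    unfolding trace jacobian_det_branch[OF w x k] .
qed

lemma lin_stable_branch:
  assumes "0 < b" "branch_w a c m y \<noteq> 0" "1 - c*y \<noteq> 0" "branch_k a c m y = k"
    and "0 < b * (1 - c*y) + y + m * (1 - c*y) * y" "y * branch_dk a c m y < 0"
  shows "lin_stable (xdot b c) (ydot a m) k (1 - c*y, y)"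
proof (rule lin_stableI[OF branch_equilibrium has_jacobian_branch jacobian_eigenvalues_branch])
  have "0 < b * (1 - c*y)\<^sup>2 * (branch_w a c m y)\<^sup>2" using assms by simp
  then have "b * (1 - c*y)\<^sup>2 * (branch_w a c m y)\<^sup>2 * (y * branch_dk a c m y) < 0"
    using assms(6) by (rule mult_pos_neg)
  then show "0 < - b * (1 - c*y)\<^sup>2 * (branch_w a c m y)\<^sup>2 * y * branch_dk a c m y"
    by (simp add: algebra_simps)
qed (use assms in auto)

lemma lin_unstable_branch:
  assumes "0 < b" "branch_w a c m y \<noteq> 0" "1 - c*y \<noteq> 0" "branch_k a c m y = k"
    and "0 < y * branch_dk a c m y"
  shows "lin_unstable (xdot b c) (ydot a m) k (1 - c*y, y)"
proof (rule lin_unstableI[OF branch_equilibrium has_jacobian_branch jacobian_eigenvalues_branch])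
  have "0 < b * (1 - c*y)\<^sup>2 * (branch_w a c m y)\<^sup>2" using assms by simp
  then have "0 < b * (1 - c*y)\<^sup>2 * (branch_w a c m y)\<^sup>2 * (y * branch_dk a c m y)"
    using assms(5) by (rule mult_pos_pos)
  then show "- b * (1 - c*y)\<^sup>2 * (branch_w a c m y)\<^sup>2 * y * branch_dk a c m y < 0"
    by (simp add: algebra_simps)
qed (use assms in auto)

lemma branch_near_0:
  assumes "0 < a" "0 < b" "branch_dk a c m 0 \<noteq> 0"
  obtains r where "0 < r"
    "\<And>y. \<bar>y\<bar> \<le> r \<Longrightarrow> 0 < branch_w a c m y \<and> 0 < 1 - c*y
       \<and> 0 < b * (1 - c*y) + y + m * (1 - c*y) * y \<and> 0 < branch_dk a c m 0 * branch_dk a c m y"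
proof -
  have positive_near: "eventually (\<lambda>y. 0 < f y) (nhds 0)" if "isCont f 0" "0 < f 0"
    for f :: "real \<Rightarrow> real"
    using order_tendstoD(1)[OF that(1)[unfolded isCont_def tendsto_at_iff_tendsto_nhds] that(2)] .
  have "isCont (branch_w a c m) 0" "isCont (branch_dk a c m) 0"
    using assms(1) unfolding branch_w_def [abs_def] branch_dk_def [abs_def]
    by (auto intro!: continuous_intros)
  moreover have "0 < branch_dk a c m 0 * branch_dk a c m 0"
    using assms(3) not_real_square_gt_zero by blast
  ultimately have "eventually (\<lambda>y. 0 < branch_w a c m y \<and> 0 < 1 - c*y
      \<and> 0 < b * (1 - c*y) + y + m * (1 - c*y) * y \<and> 0 < branch_dk a c m 0 * branch_dk a c m y)
      (nhds 0)"
    using assms \<open>0 < branch_dk a c m 0 * branch_dk a c m 0\<close>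
    by (intro eventually_conj positive_near continuous_intros) (simp_all add: branch_at_0(1))
  then show ?thesis
    using that unfolding eventually_nhds_metric_le dist_real_def by auto
qed

lemma local_branch:
  assumes "0 < a" "a < 1" "0 < b" "1 + m + a\<^sup>2 * c - 2 * a * c \<noteq> 0"
  obtains r \<delta> Y where "0 < r" "0 < \<delta>"
    "continuous_on {1/a - 1 - \<delta><..<1/a - 1 + \<delta>} Y" "Y (1/a - 1) = 0"
    "\<And>k. \<bar>k - (1/a - 1)\<bar> < \<delta> \<Longrightarrow> 0 < k \<and> branch_k a c m (Y k) = k \<and> 0 < branch_w a c m (Y k)
       \<and> 0 < 1 - c * Y k \<and> 0 < b * (1 - c * Y k) + Y k + m * (1 - c * Y k) * Y k"
    "\<And>k y. \<bar>k - (1/a - 1)\<bar> < \<delta> \<Longrightarrow> \<bar>y\<bar> \<le> r \<Longrightarrow> branch_k a c m y = k \<Longrightarrow> y = Y k"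
    "\<And>k. \<bar>k - (1/a - 1)\<bar> < \<delta> \<Longrightarrow> k \<noteq> 1/a - 1 \<Longrightarrow>
       0 < (k - (1/a - 1)) * (Y k * branch_dk a c m (Y k))"
proof -
  define k0 where "k0 = 1/a - 1"
  define \<sigma> where "\<sigma> = branch_dk a c m 0"
  have K0: "branch_k a c m 0 = k0" using assms(1) by (simp add: k0_def branch_at_0)
  have "\<sigma> \<noteq> 0" using assms(1,4) by (simp add: \<sigma>_def branch_at_0)
  then obtain r where "0 < r" and near: "\<And>y. \<bar>y\<bar> \<le> r \<Longrightarrow>
      0 < branch_w a c m y \<and> 0 < 1 - c*y
      \<and> 0 < b * (1 - c*y) + y + m * (1 - c*y) * y \<and> 0 < \<sigma> * branch_dk a c m y"
    using branch_near_0[OF assms(1,3)] unfolding \<sigma>_def by blast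
  have der: "(branch_k a c m has_real_derivative branch_dk a c m y) (at y)" if "y \<in> {-r..r}" for y
    using near[of y] that by (intro branch_k_has_derivative) (auto simp: abs_le_iff)
  have "0 < \<sigma> * branch_dk a c m y" if "y \<in> {-r..r}" for y
    using near[of y] that by (simp add: abs_le_iff)
  from local_inverse_from_derivative_sign[where s="-r" and t=r and u=0, OF der this, unfolded K0]
  obtain \<delta>1 Y where "0 < \<delta>1" and Y_cont: "continuous_on {k0 - \<delta>1<..<k0 + \<delta>1} Y" and "Y k0 = 0"
    and Y: "\<And>k. \<bar>k - k0\<bar> < \<delta>1 \<Longrightarrow> Y k \<in> {-r..r} \<and> branch_k a c m (Y k) = k"
    and Y_unique: "\<And>k y. \<bar>k - k0\<bar> < \<delta>1 \<Longrightarrow> y \<in> {-r..r} \<Longrightarrow> branch_k a c m y = k \<Longrightarrow> y = Y k"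
    and Y_sign: "\<And>k. \<bar>k - k0\<bar> < \<delta>1 \<Longrightarrow> k \<noteq> k0 \<Longrightarrow> 0 < \<sigma> * (k - k0) * Y k"
    using \<open>0 < r\<close> by auto
  define \<delta> where "\<delta> = min \<delta>1 k0"
  have "0 < k0" using assms(1,2) by (simp add: k0_def)
  show ?thesis
  proof (rule that[of r \<delta> Y, folded k0_def])
    show "continuous_on {k0 - \<delta><..<k0 + \<delta>} Y"
      using Y_cont by (rule continuous_on_subset) (auto simp: \<delta>_def)
    show "0 < k \<and> branch_k a c m (Y k) = k \<and> 0 < branch_w a c m (Y k) \<and> 0 < 1 - c * Y k
        \<and> 0 < b * (1 - c * Y k) + Y k + m * (1 - c * Y k) * Y k" if "\<bar>k - k0\<bar> < \<delta>" for k
      using that Y[of k] near[of "Y k"] by (auto simp: \<delta>_def abs_le_iff abs_less_iff)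
    show "y = Y k" if "\<bar>k - k0\<bar> < \<delta>" "\<bar>y\<bar> \<le> r" "branch_k a c m y = k" for k y
      using Y_unique[of k y] that by (auto simp: \<delta>_def abs_le_iff)
    show "0 < (k - k0) * (Y k * branch_dk a c m (Y k))" if "\<bar>k - k0\<bar> < \<delta>" "k \<noteq> k0" for k
    proof -
      have k: "\<bar>k - k0\<bar> < \<delta>1" using that(1) by (simp add: \<delta>_def)
      have "0 < \<sigma> * ((k - k0) * Y k)" using Y_sign[OF k that(2)] by (simp add: mult.assoc)
      moreover have "0 < \<sigma> * branch_dk a c m (Y k)" using Y[OF k] near by (simp add: abs_le_iff)
      ultimately have "0 < ((k - k0) * Y k) * branch_dk a c m (Y k)"
        by (rule zero_less_mult_of_common_factor)
      then show ?thesis by (simp only: mult.assoc)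
    qed
  qed (use \<open>0 < r\<close> \<open>0 < \<delta>1\<close> \<open>0 < k0\<close> \<open>Y k0 = 0\<close> in \<open>auto simp: \<delta>_def\<close>)
qed

lemma equilibria_near_E1:
  assumes "0 < b" "dist p (1, 0) < 1/2" "is_equilibrium (xdot b c) (ydot a m) k p"
  shows "p = (1, 0) \<or> p = (1 - c * snd p, snd p) \<and> branch_k a c m (snd p) = k"
proof -
  have "dist (fst p) 1 < 1/2" using dist_fst_le[of p "(1, 0)"] assms(2) by simp
  then have "fst p \<noteq> 0" by (auto simp: dist_real_def)
  then show ?thesis
    using equilibrium_xdot_ydot_cases[OF assms(1), of "fst p" c a m k "snd p"] assms(3) by (cases p) auto
qed

lemma stability_exchange:
  fixes a b c m k y :: real
  defines "k0 \<equiv> 1/a - 1"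
  assumes "0 < a" "0 < b" "0 < k" "branch_k a c m y = k"
    and "0 < branch_w a c m y" "0 < 1 - c*y" "0 < b * (1 - c*y) + y + m * (1 - c*y) * y"
    and sign: "0 < (k - k0) * (y * branch_dk a c m y)"
  shows "k < k0 \<Longrightarrow> lin_unstable (xdot b c) (ydot a m) k (1, 0)
                      \<and> lin_stable (xdot b c) (ydot a m) k (1 - c*y, y)"
    and "k0 < k \<Longrightarrow> lin_stable (xdot b c) (ydot a m) k (1, 0)
                      \<and> lin_unstable (xdot b c) (ydot a m) k (1 - c*y, y)"
proof -
  have E1_eigenvalue: "a < 1 / (1 + k) \<longleftrightarrow> k < k0" "1 / (1 + k) < a \<longleftrightarrow> k0 < k"
    using assms(2,4) by (simp_all add: k0_def field_simps)
  show "k < k0 \<Longrightarrow> lin_unstable (xdot b c) (ydot a m) k (1, 0)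
                      \<and> lin_stable (xdot b c) (ydot a m) k (1 - c*y, y)"
    using assms E1_eigenvalue
    by (auto intro!: lin_unstable_E1 lin_stable_branch simp: mult_less_0_iff zero_less_mult_iff)
  show "k0 < k \<Longrightarrow> lin_stable (xdot b c) (ydot a m) k (1, 0)
                      \<and> lin_unstable (xdot b c) (ydot a m) k (1 - c*y, y)"
    using assms E1_eigenvalue
    by (auto intro!: lin_stable_E1 lin_unstable_branch simp: zero_less_mult_iff)
qed

theorem theorem8:
  fixes a b c m E :: real
  assumes "0 < a" and "a < 1" and "0 < b" and "0 < c" and "0 < m"
    and "deriv (ucubic a c m (1 / a - 1)) E = 0"
    and "\<forall>z. deriv (ucubic a c m (1 / a - 1)) z = 0 \<longrightarrow> z \<le> E"
    and "ucubic a c m (1 / a - 1) E < 0"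
    and "m \<noteq> - a\<^sup>2 * c + 2 * a * c - 1"
  shows "transcritical_bifurcation
           (\<lambda>k x y. b * x * (1 - x - c * y))
           (\<lambda>k x y. y * (1 / (1 + k * x) - y - a * x - m * x * y))
           (1, 0) (1 / a - 1)"
proof -
  define k0 where "k0 = 1/a - 1"
  have "1 + m + a\<^sup>2 * c - 2 * a * c \<noteq> 0" using assms(9) by (auto simp: algebra_simps)
  then obtain r \<delta> Y where "0 < r" "0 < \<delta>" and Y_cont: "continuous_on {k0 - \<delta><..<k0 + \<delta>} Y"
    and "Y k0 = 0" and branch: "\<And>k. \<bar>k - k0\<bar> < \<delta> \<Longrightarrow>
       0 < k \<and> branch_k a c m (Y k) = k \<and> 0 < branch_w a c m (Y k) \<and> 0 < 1 - c * Y k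
       \<and> 0 < b * (1 - c * Y k) + Y k + m * (1 - c * Y k) * Y k"
    and unique: "\<And>k y. \<bar>k - k0\<bar> < \<delta> \<Longrightarrow> \<bar>y\<bar> \<le> r \<Longrightarrow> branch_k a c m y = k \<Longrightarrow> y = Y k"
    and sign: "\<And>k. \<bar>k - k0\<bar> < \<delta> \<Longrightarrow> k \<noteq> k0 \<Longrightarrow> 0 < (k - k0) * (Y k * branch_dk a c m (Y k))"
    using local_branch[OF assms(1-3)] unfolding k0_def by blast
  define Q where "Q k = (1 - c * Y k, Y k)" for k
  show ?thesis
    unfolding k0_def[symmetric]
  proof (rule transcritical_bifurcationI[of \<delta> "min (1/2) r" _ Q])
    show "continuous_on {k0 - \<delta><..<k0 + \<delta>} Q"
      unfolding Q_def by (intro continuous_intros Y_cont)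
    show "is_equilibrium (xdot b c) (ydot a m) k (1, 0) \<and> is_equilibrium (xdot b c) (ydot a m) k (Q k)"
      if "\<bar>k - k0\<bar> < \<delta>" for k
      using branch[OF that] unfolding Q_def by (auto intro!: equilibrium_E1 branch_equilibrium)
    show "p = (1, 0) \<or> p = Q k" if "\<bar>k - k0\<bar> < \<delta>" "dist p (1, 0) < min (1/2) r"
      and "is_equilibrium (xdot b c) (ydot a m) k p" for k p
      using equilibria_near_E1[OF assms(3) _ that(3)] unique[OF that(1)] that(2)
        dist_snd_le[of p "(1, 0)"] unfolding Q_def by (force simp: dist_real_def)
    show "lin_unstable (xdot b c) (ydot a m) k (1, 0) \<and> lin_stable (xdot b c) (ydot a m) k (Q k)"
      if "k0 - \<delta> < k" "k < k0" for k
      using that branch[of k] sign[of k] stability_exchange(1)[OF assms(1,3), folded k0_def]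
      unfolding Q_def by (auto simp: abs_less_iff)
    show "lin_stable (xdot b c) (ydot a m) k (1, 0) \<and> lin_unstable (xdot b c) (ydot a m) k (Q k)"
      if "k0 < k" "k < k0 + \<delta>" for k
      using that branch[of k] sign[of k] stability_exchange(2)[OF assms(1,3), folded k0_def]
      unfolding Q_def by (auto simp: abs_less_iff)
    show "Q k \<noteq> (1, 0)" if "\<bar>k - k0\<bar> < \<delta>" "k \<noteq> k0" for k
      using sign[OF that] by (auto simp: Q_def)
  qed (use \<open>0 < r\<close> \<open>0 < \<delta>\<close> \<open>Y k0 = 0\<close> in \<open>auto simp: Q_def\<close>)
qed

end
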